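(* Let $n\ge 2$, $u\in\mathbb{R}^n$ and $s,v\in\mathcal{Q}_0(u)$. Then $(sv^t)^{[2]}$ is a $P_0$-matrix.
   Context: For $u\in\mathbb{R}^n$, $\mathcal{Q}(u)$ is the set of vectors with the same entrywise sign pattern as $u$, and $\mathcal{Q}_0(u)$ its closure. A square real matrix is a $P_0$-matrix if all its principal minors are nonnegative. For $M\in\mathbb{R}^{n\times n}$, $M^{[2]}$ is the second additive compound: the matrix of $x\wedge y\mapsto Mx\wedge y+x\wedge My$ on $\Lambda^2\mathbb{R}^n$ in the lexicographically ordered basis $e_i\wedge e_j$, $i<j$. *)

theory Defs
  imports "HOL-Analysis.Analysis"
begin

definition Qset :: "real^'n \<Rightarrow> (real^'n) set" where
  "Qset u = {x. \<forall>i. sgn (x$i) = sgn (u$i)}"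

definition Q0set :: "real^'n \<Rightarrow> (real^'n) set" where
  "Q0set u = closure (Qset u)"

(* Index set of the basis e_i \<and> e_j, i < j, of \<Lambda>^2 R^n *)
definition pairs_idx :: "('n::linorder \<times> 'n) set" where
  "pairs_idx = {(i,j). i < j}"

(* Coordinate of x \<and> y at basis vector e_i \<and> e_j (i < j) *)
definition wedge2 :: "real^'n \<Rightarrow> real^'n \<Rightarrow> ('n \<times> 'n) \<Rightarrow> real" where
  "wedge2 x y p = x $ fst p * y $ snd p - x $ snd p * y $ fst p"

(* Second additive compound: entry in row (i,j), column (k,l) is the (i,j)-coordinate of
   M e_k \<and> e_l + e_k \<and> M e_l; as a matrix indexed by pairs_idx *)
definition add_compound2 :: "real^'n^'n \<Rightarrow> ('n \<times> 'n) \<Rightarrow> ('n \<times> 'n) \<Rightarrow> real" where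
  "add_compound2 M p q =
     wedge2 (M *v axis (fst q) 1) (axis (snd q) 1) p + wedge2 (axis (fst q) 1) (M *v axis (snd q) 1) p"

definition det_on :: "'a set \<Rightarrow> ('a \<Rightarrow> 'a \<Rightarrow> real) \<Rightarrow> real" where
  "det_on S A = (\<Sum>p | p permutes S. of_int (sign p) * (\<Prod>i\<in>S. A i (p i)))"

definition P0_on :: "'a set \<Rightarrow> ('a \<Rightarrow> 'a \<Rightarrow> real) \<Rightarrow> bool" where
  "P0_on I A \<longleftrightarrow> (\<forall>S. S \<subseteq> I \<and> S \<noteq> {} \<longrightarrow> det_on S A \<ge> 0)"

end

theory Submission
  imports Defs
begin

text \<open>
  Writing \<open>\<iota>\<^sub>x(e\<^sub>i \<and> e\<^sub>j) = x\<^sub>i e\<^sub>j - x\<^sub>j e\<^sub>i\<close>, the \<open>((i,j),(k,l))\<close> entry of the second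
  additive compound of \<open>s v\<^sup>T\<close> is the inner product of \<open>\<iota>\<^sub>s(e\<^sub>i \<and> e\<^sub>j)\<close> and \<open>\<iota>\<^sub>v(e\<^sub>k \<and> e\<^sub>l)\<close>.
  If every \<open>s\<^sub>c v\<^sub>c > 0\<close>, then \<open>\<iota>\<^sub>x(e\<^sub>i \<and> e\<^sub>j)\<close> has coordinates \<open>x\<^sub>i x\<^sub>j (e\<^sub>j - e\<^sub>i)\<^sub>c / x\<^sub>c\<close>,
  so the compound is \<open>diag(s\<^sub>i s\<^sub>j) G W G\<^sup>T diag(v\<^sub>k v\<^sub>l)\<close> with \<open>G\<close> the incidence matrix
  of the pairs and \<open>W = diag(1/(s\<^sub>c v\<^sub>c))\<close>. A principal minor is then a nonnegative
  multiple of a weighted Gram determinant, which is a sum of squares by the Cauchy--Binet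
  expansion. Vectors \<open>s, v\<close> in \<open>\<Q>\<^sub>0(u)\<close> only satisfy \<open>s\<^sub>c v\<^sub>c \<ge> 0\<close>, but they are limits of
  pairs with \<open>s\<^sub>c v\<^sub>c > 0\<close>, and the minors depend continuously on \<open>s, v\<close>.
\<close>

lemma det_on_transpose:
  assumes "finite S"
  shows "det_on S (\<lambda>a b. A b a) = det_on S A"
proof -
  have "det_on S A = (\<Sum>p | p permutes S. of_int (sign (inv p)) * (\<Prod>a\<in>S. A a (inv p a)))"
    unfolding det_on_def by (rule sum_permutations_inverse)
  also have "\<dots> = det_on S (\<lambda>a b. A b a)"
    unfolding det_on_def
  proof (rule sum.cong[OF refl])
    fix p assume "p \<in> {p. p permutes S}"
    then have p: "p permutes S" by simp
    have "(\<Prod>a\<in>S. A a (inv p a)) = (\<Prod>a\<in>S. A (p a) (inv p (p a)))"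
      using prod.permute[OF p, of "\<lambda>a. A a (inv p a)"] by (simp add: o_def)
    also have "\<dots> = (\<Prod>a\<in>S. A (p a) a)"
      using permutes_inverses(2)[OF p] by simp
    finally show "of_int (sign (inv p)) * (\<Prod>a\<in>S. A a (inv p a)) = of_int (sign p) * (\<Prod>a\<in>S. A (p a) a)"
      using p assms by (simp add: sign_inverse permutes_imp_permutation)
  qed
  finally show ?thesis ..
qed

lemma det_on_permute_rows:
  assumes "finite S" and q: "q permutes S"
  shows "det_on S (\<lambda>a b. A (q a) b) = of_int (sign q) * det_on S A"
proof -
  have "det_on S (\<lambda>a b. A (q a) b)
      = (\<Sum>p | p permutes S. of_int (sign (p \<circ> q)) * (\<Prod>a\<in>S. A (q a) (p (q a))))"
    unfolding det_on_def by (subst sum_permutations_compose_right[OF q]) simp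
  also have "\<dots> = (\<Sum>p | p permutes S. of_int (sign q) * (of_int (sign p) * (\<Prod>a\<in>S. A a (p a))))"
  proof (rule sum.cong[OF refl])
    fix p assume "p \<in> {p. p permutes S}"
    then have "permutation p" "permutation q"
      using q assms(1) permutation_permutes by auto
    moreover have "(\<Prod>a\<in>S. A (q a) (p (q a))) = (\<Prod>a\<in>S. A a (p a))"
      using prod.permute[OF q, of "\<lambda>a. A a (p a)"] by (simp add: o_def)
    ultimately show "of_int (sign (p \<circ> q)) * (\<Prod>a\<in>S. A (q a) (p (q a)))
        = of_int (sign q) * (of_int (sign p) * (\<Prod>a\<in>S. A a (p a)))"
      by (simp add: sign_compose)
  qed
  also have "\<dots> = of_int (sign q) * det_on S A"
    unfolding det_on_def by (simp add: sum_distrib_left)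
  finally show ?thesis .
qed

lemma det_on_scale:
  assumes "finite S"
  shows "det_on S (\<lambda>a b. \<rho> a * A a b * \<kappa> b) = (\<Prod>a\<in>S. \<rho> a) * (\<Prod>b\<in>S. \<kappa> b) * det_on S A"
proof -
  have "(\<Prod>a\<in>S. \<kappa> (p a)) = (\<Prod>b\<in>S. \<kappa> b)" if "p permutes S" for p
    using prod.permute[OF that, of \<kappa>] by (simp add: o_def)
  then show ?thesis
    unfolding det_on_def by (simp add: sum_distrib_left prod.distrib mult_ac)
qed

lemma det_on_mult_transpose_expand:
  assumes "finite S" "finite C"
  shows "det_on S (\<lambda>a b. \<Sum>c\<in>C. X a c * Y b c)
       = (\<Sum>f\<in>S \<rightarrow>\<^sub>E C. (\<Prod>a\<in>S. X a (f a)) * det_on S (\<lambda>a b. Y b (f a)))"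
proof -
  have "det_on S (\<lambda>a b. \<Sum>c\<in>C. X a c * Y b c)
      = (\<Sum>p | p permutes S. \<Sum>f\<in>S \<rightarrow>\<^sub>E C. of_int (sign p) * (\<Prod>a\<in>S. X a (f a) * Y (p a) (f a)))"
    unfolding det_on_def using assms by (simp add: prod_sum_PiE sum_distrib_left)
  also have "\<dots> = (\<Sum>f\<in>S \<rightarrow>\<^sub>E C. \<Sum>p | p permutes S. of_int (sign p) * (\<Prod>a\<in>S. X a (f a) * Y (p a) (f a)))"
    by (rule sum.swap)
  also have "\<dots> = (\<Sum>f\<in>S \<rightarrow>\<^sub>E C. (\<Prod>a\<in>S. X a (f a)) * det_on S (\<lambda>a b. Y b (f a)))"
    unfolding det_on_def by (simp add: prod.distrib sum_distrib_left mult_ac)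
  finally show ?thesis .
qed

lemma sum_PiE_compose_permutes:
  assumes q: "q permutes S"
  shows "(\<Sum>f\<in>S \<rightarrow>\<^sub>E C. g (f \<circ> q)) = (\<Sum>f\<in>S \<rightarrow>\<^sub>E C. g f)"
proof (rule sum.reindex_bij_witness[where i = "\<lambda>f. f \<circ> inv q" and j = "\<lambda>f. f \<circ> q"])
  have qq: "q \<circ> inv q = id" "inv q \<circ> q = id"
    using permutes_inv_o[OF q] by auto
  fix f assume f: "f \<in> S \<rightarrow>\<^sub>E C"
  show "f \<circ> inv q \<circ> q = f" "f \<circ> q \<circ> inv q = f"
    by (simp_all only: comp_assoc qq comp_id)
  show "f \<circ> inv q \<in> S \<rightarrow>\<^sub>E C" "f \<circ> q \<in> S \<rightarrow>\<^sub>E C"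
    using f q permutes_inv[OF q]
    by (auto simp: PiE_iff extensional_def permutes_in_image permutes_not_in)
qed (rule refl)

text \<open>Cauchy--Binet summed over all column maps \<open>f\<close>: non-injective ones contribute
  nothing, and each column set occurs once per ordering, whence the factorial.\<close>

lemma cauchy_binet_det_on:
  assumes S: "finite S" and C: "finite C"
  shows "fact (card S) * det_on S (\<lambda>a b. \<Sum>c\<in>C. X a c * Y b c)
       = (\<Sum>f\<in>S \<rightarrow>\<^sub>E C. det_on S (\<lambda>a b. X b (f a)) * det_on S (\<lambda>a b. Y b (f a)))"
proof -
  let ?T = "\<lambda>f. (\<Prod>a\<in>S. X a (f a)) * det_on S (\<lambda>a b. Y b (f a))"
  have reindex: "(\<Sum>f\<in>S \<rightarrow>\<^sub>E C. ?T (f \<circ> q)) = (\<Sum>f\<in>S \<rightarrow>\<^sub>E C. ?T f)" if "q permutes S" for q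
    using that by (rule sum_PiE_compose_permutes)
  have "fact (card S) * det_on S (\<lambda>a b. \<Sum>c\<in>C. X a c * Y b c)
      = (\<Sum>q | q permutes S. \<Sum>f\<in>S \<rightarrow>\<^sub>E C. ?T f)"
    using card_permutations[OF refl S] det_on_mult_transpose_expand[OF S C] by simp
  also have "\<dots> = (\<Sum>q | q permutes S. \<Sum>f\<in>S \<rightarrow>\<^sub>E C. ?T (f \<circ> q))"
    by (rule sum.cong[OF refl]) (simp only: mem_Collect_eq reindex)
  also have "\<dots> = (\<Sum>f\<in>S \<rightarrow>\<^sub>E C. \<Sum>q | q permutes S. of_int (sign q) * (\<Prod>a\<in>S. X a (f (q a)))
                                                 * det_on S (\<lambda>a b. Y b (f a)))"
    by (subst sum.swap) (simp add: det_on_permute_rows[OF S, of _ "\<lambda>a b. Y b (f a)" for f] mult_ac)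
  also have "\<dots> = (\<Sum>f\<in>S \<rightarrow>\<^sub>E C. det_on S (\<lambda>a b. X a (f b)) * det_on S (\<lambda>a b. Y b (f a)))"
    by (simp add: det_on_def sum_distrib_right)
  also have "\<dots> = (\<Sum>f\<in>S \<rightarrow>\<^sub>E C. det_on S (\<lambda>a b. X b (f a)) * det_on S (\<lambda>a b. Y b (f a)))"
    by (simp add: det_on_transpose[OF S, of "\<lambda>a b. X a (f b)" for f])
  finally show ?thesis .
qed

lemma det_on_weighted_gram_nonneg:
  assumes S: "finite S" and C: "finite C" and w: "\<And>c. c \<in> C \<Longrightarrow> 0 \<le> w c"
  shows "0 \<le> det_on S (\<lambda>a b. \<Sum>c\<in>C. B a c * w c * B b c)"
proof -
  have scale: "det_on S (\<lambda>a b. w (f a) * B b (f a)) = (\<Prod>a\<in>S. w (f a)) * det_on S (\<lambda>a b. B b (f a))"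
    for f using det_on_scale[OF S, of "\<lambda>a. w (f a)" "\<lambda>a b. B b (f a)" "\<lambda>_. 1"] by simp
  have "fact (card S) * det_on S (\<lambda>a b. \<Sum>c\<in>C. B a c * w c * B b c)
      = fact (card S) * det_on S (\<lambda>a b. \<Sum>c\<in>C. (w c * B a c) * B b c)"
    by (simp add: mult_ac)
  also have "\<dots> = (\<Sum>f\<in>S \<rightarrow>\<^sub>E C. det_on S (\<lambda>a b. w (f a) * B b (f a)) * det_on S (\<lambda>a b. B b (f a)))"
    by (rule cauchy_binet_det_on[OF S C])
  also have "\<dots> = (\<Sum>f\<in>S \<rightarrow>\<^sub>E C. (\<Prod>a\<in>S. w (f a)) * (det_on S (\<lambda>a b. B b (f a)))\<^sup>2)"
    by (simp add: scale power2_eq_square mult.assoc)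
  also have "\<dots> \<ge> 0"
    using w by (intro sum_nonneg mult_nonneg_nonneg prod_nonneg) (auto simp: PiE_iff)
  finally show ?thesis
    using fact_gt_zero[of "card S", where 'a = real] by (simp add: zero_le_mult_iff)
qed

definition contract :: "real^'n \<Rightarrow> 'n \<times> 'n \<Rightarrow> 'n \<Rightarrow> real" where
  "contract x p c = of_bool (c = snd p) * x$fst p - of_bool (c = fst p) * x$snd p"

lemma sum_contract_mult:
  fixes x :: "real^'n::finite"
  shows "(\<Sum>c\<in>UNIV. contract x p c * y c) = x$fst p * y (snd p) - x$snd p * y (fst p)"
proof -
  have "contract x p c * y c = of_bool (c = snd p) * (x$fst p * y c) - of_bool (c = fst p) * (x$snd p * y c)" for c
    unfolding contract_def by (simp add: algebra_simps)
  then show ?thesis by (simp add: sum_subtractf Int_def)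
qed

lemma add_compound2_rank_one:
  fixes s v :: "real^'n::finite"
  shows "add_compound2 (\<chi> i j. s$i * v$j) p q = (\<Sum>c\<in>UNIV. contract s p c * contract v q c)"
  unfolding sum_contract_mult
  unfolding add_compound2_def wedge2_def contract_def
  by (simp add: matrix_vector_mult_def axis_def algebra_simps if_distrib[of "\<lambda>x. _ * x"] cong: if_cong)

lemma contract_eq_scaled_incidence:
  assumes "x$fst p \<noteq> 0" "x$snd p \<noteq> 0"
  shows "contract x p c = x$fst p * x$snd p * (of_bool (c = snd p) - of_bool (c = fst p)) / x$c"
  using assms unfolding contract_def by (auto simp: field_simps)

lemma det_on_add_compound2_rank_one_nonneg_of_pos:
  fixes s v :: "real^'n::finite"
  assumes sv: "\<And>k. 0 < s$k * v$k"
  shows "0 \<le> det_on S (add_compound2 (\<chi> i j. s$i * v$j))"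
proof -
  let ?B = "\<lambda>p c. of_bool (c = snd p) - of_bool (c = fst p) :: real"
  let ?G = "\<lambda>p q. \<Sum>c\<in>UNIV. ?B p c * (1 / (s$c * v$c)) * ?B q c"
  have nz: "s$k \<noteq> 0" "v$k \<noteq> 0" for k
    using sv[of k] by auto
  have "contract s p c * contract v q c = (s$fst p * s$snd p) * (?B p c * (1 / (s$c * v$c)) * ?B q c) * (v$fst q * v$snd q)"
    for p q c by (simp add: contract_eq_scaled_incidence nz)
  then have "add_compound2 (\<chi> i j. s$i * v$j) = (\<lambda>p q. (s$fst p * s$snd p) * ?G p q * (v$fst q * v$snd q))"
    by (intro ext) (simp add: add_compound2_rank_one sum_distrib_left sum_distrib_right)
  then have "det_on S (add_compound2 (\<chi> i j. s$i * v$j))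
      = (\<Prod>p\<in>S. s$fst p * s$snd p) * (\<Prod>q\<in>S. v$fst q * v$snd q) * det_on S ?G"
    by (simp add: det_on_scale)
  also have "\<dots> = (\<Prod>p\<in>S. (s$fst p * v$fst p) * (s$snd p * v$snd p)) * det_on S ?G"
    by (simp add: prod.distrib[symmetric] mult_ac)
  also have "\<dots> \<ge> 0"
  proof (intro mult_nonneg_nonneg[OF prod_nonneg] det_on_weighted_gram_nonneg)
    show "0 \<le> (s$fst p * v$fst p) * (s$snd p * v$snd p)" for p
      using sv by (simp add: less_imp_le)
    show "0 \<le> 1 / (s$c * v$c)" for c
      using sv[of c] by simp
  qed simp_all
  finally show ?thesis .
qed

lemma det_on_add_compound2_rank_one_nonneg:
  fixes s v :: "real^'n::finite"
  assumes sv: "\<And>k. 0 \<le> s$k * v$k"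
  shows "0 \<le> det_on S (add_compound2 (\<chi> i j. s$i * v$j))"
proof -
  \<comment> \<open>\<open>d\<close> moves \<open>s\<^sub>k\<close> and \<open>v\<^sub>k\<close> away from \<open>0\<close> in their common sign direction.\<close>
  define d :: "real^'n" where "d = (\<chi> k. if 0 \<le> s$k + v$k then 1 else -1)"
  define F where "F e = det_on S (add_compound2 (\<chi> i j. (s + e *\<^sub>R d)$i * (v + e *\<^sub>R d)$j))" for e
  have pos: "0 \<le> F e" if "0 < e" for e
    unfolding F_def
  proof (rule det_on_add_compound2_rank_one_nonneg_of_pos)
    fix k
    from sv[of k] have "0 \<le> s$k \<and> 0 \<le> v$k \<or> s$k \<le> 0 \<and> v$k \<le> 0"
      by (auto simp: zero_le_mult_iff)
    then show "0 < (s + e *\<^sub>R d)$k * (v + e *\<^sub>R d)$k"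
      using that by (auto simp: d_def intro: mult_pos_pos mult_neg_neg)
  qed
  have "\<forall>\<^sub>F e in at_right 0. 0 \<le> F e"
    using eventually_at_right_less[of 0] by (rule eventually_mono) (rule pos)
  moreover have "isCont F 0"
    unfolding F_def add_compound2_rank_one contract_def det_on_def by (intro continuous_intros)
  then have "(F \<longlongrightarrow> F 0) (at_right 0)"
    by (simp add: isCont_def filterlim_at_split)
  ultimately have "0 \<le> F 0"
    by (intro tendsto_lowerbound) auto
  then show ?thesis
    by (simp add: F_def)
qed

lemma Q0set_mult_sgn:
  fixes x u :: "real^'n"
  assumes "x \<in> Q0set u"
  shows "x$i * sgn (u$i) = \<bar>x$i\<bar>"
proof -
  have "closed {x::real^'n. x$i * sgn (u$i) = \<bar>x$i\<bar>}"
    by (intro closed_Collect_eq continuous_intros)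
  moreover have "Qset u \<subseteq> {x. x$i * sgn (u$i) = \<bar>x$i\<bar>}"
    by (auto simp: Qset_def abs_sgn[of "_ $ i"])
  ultimately show ?thesis
    using assms closure_minimal unfolding Q0set_def by blast
qed

lemma Q0set_mult_nonneg:
  assumes "s \<in> Q0set u" "v \<in> Q0set u"
  shows "0 \<le> s$k * v$k"
proof (cases "u$k = 0")
  case True
  then show ?thesis
    using Q0set_mult_sgn[OF assms(1), of k] by simp
next
  case False
  then have "s$k * v$k = (s$k * sgn (u$k)) * (v$k * sgn (u$k))"
    by (simp add: sgn_real_def)
  then show ?thesis
    using Q0set_mult_sgn[OF assms(1), of k] Q0set_mult_sgn[OF assms(2), of k] by simp
qed

theorem lemma4p1:
  fixes u s v :: "real^'n::{finite,linorder}"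
  assumes "CARD('n) \<ge> 2"
    and "s \<in> Q0set u" and "v \<in> Q0set u"
  shows "P0_on pairs_idx (add_compound2 (\<chi> i j. s$i * v$j))"
  \<comment> \<open>The dimension bound is not needed: for a single index \<open>pairs_idx\<close> is empty.\<close>
  unfolding P0_on_def
  using det_on_add_compound2_rank_one_nonneg[OF Q0set_mult_nonneg[OF assms(2,3)]] by blast

end
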